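(* Let $a\in\mathbb{C}$, $b\in\mathbb{C}$, $c\in\mathbb{C}\setminus\{0\}$, and let $S_n(x)\sim\left(\left(\frac{e^t-1}{t}\right)^a,\ \frac{t^2e^{bt}}{e^{ct}-1}\right)$. Then for $n\ge1$, $$S_n(x)=\sum_{l=0}^{n-1}\sum_{j=0}^{n-1-l}\frac{\binom{n-1}{l}}{\binom{l+n}{l}}\binom{n-1-l}{j}S_2(l+n,n)\,c^{n+l}(-nb)^j\,B_{n-l-j}^{(a)}(x).$$
   Context: For invertible $g(t)$ (nonzero constant term) and delta series $f(t)$ ($f(0)=0$, nonzero coefficient of $t$), the Sheffer sequence $S_n(x)\sim(g(t),f(t))$ is the unique polynomial sequence with $\sum_{k\ge0}S_k(y)\frac{t^k}{k!}=\frac{1}{g(\bar f(t))}e^{y\bar f(t)}$ for all $y\in\mathbb{C}$, where $\bar f$ is the compositional inverse of $f$. Complex powers of series with constant term $1$ are defined by $h^a=\exp(a\log h)$. The Bernoulli polynomials of order $a$ are defined by $\left(\frac{t}{e^t-1}\right)^a e^{xt}=\sum_{n\ge0}B_n^{(a)}(x)\frac{t^n}{n!}$. The Stirling numbers of the second kind are defined by $(e^t-1)^n=n!\sum_{k\ge n}S_2(k,n)\frac{t^k}{k!}$. *)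

theory Defs
  imports Complex_Main "HOL-Computational_Algebra.Formal_Power_Series"
    "HOL-Computational_Algebra.Polynomial" "HOL-Combinatorics.Stirling"
begin

text \<open>Logarithm of a formal power series with constant term 1:
  log h = ln(1 + (h - 1)), where fps_ln 1 is the series of ln(1+t).\<close>
definition fps_log1 :: "complex fps \<Rightarrow> complex fps" where
  "fps_log1 h = fps_ln 1 oo (h - 1)"

definition fps_cpow :: "complex fps \<Rightarrow> complex \<Rightarrow> complex fps" where
  "fps_cpow h a = fps_exp 1 oo (fps_const a * fps_log1 h)"

text \<open>Sheffer sequence S ~ (g, f): for all y,
  sum_k S_k(y) t^k/k! = 1/g(fbar t) * exp(y fbar t), fbar the compositional inverse of f.\<close>
definition sheffer :: "complex fps \<Rightarrow> complex fps \<Rightarrow> (nat \<Rightarrow> complex poly) \<Rightarrow> bool" where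
  "sheffer g f S \<longleftrightarrow>
     (\<forall>y. Abs_fps (\<lambda>k. poly (S k) y / fact k)
          = inverse (g oo fps_inv f) * (fps_exp y oo fps_inv f))"

definition bernoulli_ord :: "complex \<Rightarrow> nat \<Rightarrow> complex \<Rightarrow> complex" where
  "bernoulli_ord a n x =
     fact n * fps_nth (fps_cpow (fps_X / (fps_exp 1 - 1)) a * fps_exp x) n"

end

theory Submission
  imports Defs "HOL-Computational_Algebra.Formal_Laurent_Series"
begin

text \<open>Write the delta series as \<open>f = t K(t)\<close> with \<open>K = e^(bt) t / (e^(ct) - 1)\<close>. By the
  defining generating function, \<open>S_n(x) = n! [t^n] H(f\<inverse>(t))\<close> with \<open>H = e^(xt) / g(t)\<close>,
  and since \<open>1/g = (t/(e^t - 1))^a\<close> the coefficients of \<open>H\<close> are \<open>B_i^(a)(x) / i!\<close>.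
  Lagrange inversion gives \<open>n [t^n] f\<inverse>^i = i [t^(n-i)] K^(-n)\<close>, and
  \<open>K^(-n) = ((e^(ct) - 1)/t)^n e^(-nbt)\<close> has coefficients expressed through Stirling numbers of
  the second kind. Expanding, and regrouping the resulting double sum by the power of \<open>b\<close>,
  yields the formula.\<close>

lemma fps_to_fls_sum: "fps_to_fls (\<Sum>k\<in>A. f k) = (\<Sum>k\<in>A. fps_to_fls (f k))"
  by (induction A rule: infinite_finite_induct) auto

lemma fps_cutoff_eq_sum: "fps_cutoff n f = (\<Sum>k<n. fps_const (f $ k) * fps_X ^ k)"
  by (rule fps_ext) (simp add: fps_sum_nth if_distrib cong: if_cong)

lemma fps_compose_eq_cutoff_sum:
  fixes A f :: "'a::idom fps"
  assumes "f $ 0 = 0"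
  shows "A oo f = (\<Sum>k<N. fps_const (A $ k) * f ^ k) + f ^ N * (fps_shift N A oo f)"
proof -
  have "A = fps_cutoff N A + fps_X ^ N * fps_shift N A"
    by (metis fps_shift_cutoff' add.commute)
  then have "A oo f = (fps_cutoff N A + fps_X ^ N * fps_shift N A) oo f"
    by simp
  also have "\<dots> = (\<Sum>k<N. fps_const (A $ k) * f ^ k) + f ^ N * (fps_shift N A oo f)"
    by (simp add: fps_cutoff_eq_sum fps_compose_add_distrib fps_compose_sum_distrib
        fps_compose_mult_distrib[OF assms] fps_X_power_compose[OF assms])
  finally show ?thesis .
qed

lemma fps_deriv_compose_eq_cutoff_sum:
  fixes A f :: "'a::idom fps"
  assumes "f $ 0 = 0"
  shows "\<exists>G. fps_deriv (A oo f)
    = (\<Sum>k<Suc n. fps_const (of_nat k * A $ k) * (f ^ (k - 1) * fps_deriv f)) + f ^ n * G"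
proof -
  define T where "T = fps_shift (Suc n) A oo f"
  have "fps_deriv (A oo f)
      = fps_deriv (\<Sum>k<Suc n. fps_const (A $ k) * f ^ k) + fps_deriv (f ^ Suc n * T)"
    by (simp only: fps_compose_eq_cutoff_sum[OF assms, of A "Suc n"] fps_deriv_add T_def)
  also have "fps_deriv (\<Sum>k<Suc n. fps_const (A $ k) * f ^ k)
      = (\<Sum>k<Suc n. fps_const (of_nat k * A $ k) * (f ^ (k - 1) * fps_deriv f))"
    by (simp add: fps_deriv_sum fps_deriv_power mult_ac flip: fps_const_mult)
  also have "fps_deriv (f ^ Suc n * T) = f ^ n * (of_nat (Suc n) * fps_deriv f * T + f * fps_deriv T)"
    unfolding fps_deriv_mult fps_deriv_power' diff_Suc_1 by (simp add: algebra_simps)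
  finally show ?thesis by blast
qed

lemma fls_residue_inverse_power_times_deriv:
  fixes F :: "'a::field_char_0 fls"
  assumes "j \<noteq> 1"
  shows "fls_residue (inverse F ^ j * fls_deriv F) = 0"
proof -
  consider "j = 0" | i where "j = Suc (Suc i)"
    using assms by (metis One_nat_def not0_implies_Suc)
  then show ?thesis
  proof cases
    case 1
    then show ?thesis by simp
  next
    case (2 i)
    have "fls_deriv (inverse F ^ Suc i) = - (fls_const (of_nat (Suc i)) * (inverse F ^ j * fls_deriv F))"
      unfolding fls_deriv_power fls_inverse_deriv fls_of_nat
      by (simp add: 2 power2_eq_square mult_ac del: of_nat_Suc)
    then have "of_nat (Suc i) * fls_residue (inverse F ^ j * fls_deriv F) = 0"
      using fls_residue_deriv[of "inverse F ^ Suc i"] by (simp del: of_nat_Suc)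
    then show ?thesis by (simp del: fls_residue_def of_nat_Suc)
  qed
qed

lemma fls_residue_power_times_deriv_div_power:
  fixes f :: "'a::field_char_0 fps"
  assumes "subdegree f = 1" "1 \<le> k" "k \<le> n"
  shows "fls_residue (fps_to_fls (f ^ (k - 1) * fps_deriv f) * inverse (fps_to_fls f) ^ n)
    = (if k = n then 1 else 0)"
proof -
  define F where "F = fps_to_fls f"
  have "F \<noteq> 0" using assms(1) by (auto simp: F_def)
  then have "inverse F ^ (n + 1 - k) = inverse F ^ n * F ^ (k - 1)"
    using power_diff_conv_inverse[of "inverse F" "k - 1" n] assms(2,3) by simp
  then have "fps_to_fls (f ^ (k - 1) * fps_deriv f) * inverse F ^ n
      = inverse F ^ (n + 1 - k) * fls_deriv F"
    by (simp add: F_def fls_times_fps_to_fls fps_to_fls_power fls_deriv_fps_to_fls mult_ac)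
  moreover have "fls_residue (inverse F * fls_deriv F) = 1"
    using fls_residue_deriv_times_inverse_eq_subdegree(2)[of F] assms(1)
    by (simp add: F_def fls_subdegree_fls_to_fps del: fls_residue_def)
  ultimately show ?thesis
    using fls_residue_inverse_power_times_deriv[of "n + 1 - k" F] assms(2,3)
    by (auto simp: F_def simp del: fls_residue_def)
qed

lemma fls_residue_X_power_times_inverse_power:
  fixes K :: "'a::field_char_0 fps"
  assumes "K $ 0 \<noteq> 0" "1 \<le> m" "m \<le> n"
  shows "fls_residue (fps_to_fls (fps_X ^ (m - 1)) * inverse (fps_to_fls (fps_X * K)) ^ n)
    = (inverse K ^ n) $ (n - m)"
proof -
  have "inverse (fps_to_fls (fps_X * K)) = fls_X_inv * fps_to_fls (inverse K)"
    using assms(1) by (simp add: fls_times_fps_to_fls fls_inverse_X fls_inverse_fps_to_fls subdegree_eq_0_iff)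
  then have "fps_to_fls (fps_X ^ (m - 1)) * inverse (fps_to_fls (fps_X * K)) ^ n
      = fls_shift (- int (m - 1)) (fls_shift (int n) (fps_to_fls (inverse K ^ n)))"
    by (simp add: power_mult_distrib fps_to_fls_power fls_X_power_times_conv_shift
        fls_X_inv_power_times_conv_shift mult.assoc)
  then show ?thesis
    using assms(2,3) by (simp add: nat_diff_distrib')
qed

lemma fls_residue_fps_power_times_div_power:
  fixes f :: "'a::field fps"
  assumes "f \<noteq> 0"
  shows "fls_residue (fps_to_fls (f ^ n * g) * inverse (fps_to_fls f) ^ n) = 0"
proof -
  have "fps_to_fls f ^ n * inverse (fps_to_fls f) ^ n = 1"
    using assms by (simp flip: power_mult_distrib)
  then have "fps_to_fls (f ^ n * g) * inverse (fps_to_fls f) ^ n = fps_to_fls g"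
    by (simp add: fls_times_fps_to_fls fps_to_fls_power mult_ac)
  then show ?thesis by simp
qed

text \<open>Write \<open>fps_inv f ^ m = A\<close>, so that \<open>X^m = A(f)\<close>; differentiating
  the expansion of \<open>A(f)\<close> up to order \<open>n\<close> and dividing by \<open>f^n\<close>, the residue on the right
  picks out \<open>n A_n\<close>, while on the left it is \<open>m [t^(n-m)] K^(-n)\<close>.\<close>

lemma fps_inv_power_nth:
  fixes K :: "'a::field_char_0 fps"
  assumes K0: "K $ 0 \<noteq> 0" and m: "1 \<le> m" "m \<le> n"
  shows "of_nat n * (fps_inv (fps_X * K) ^ m) $ n = of_nat m * (inverse K ^ n) $ (n - m)"
proof -
  define f where "f = fps_X * K"
  define A where "A = fps_inv f ^ m"
  define res where "res g = fls_residue (fps_to_fls g * inverse (fps_to_fls f) ^ n)" for g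
  have f0: "f $ 0 = 0" and f1: "f $ 1 \<noteq> 0" using K0 by (simp_all add: f_def)
  have "subdegree f = 1" using f0 f1 by (intro subdegreeI) (auto simp: less_Suc_eq)
  have "A oo f = fps_X ^ m"
    using fps_compose_power[OF f0, of "fps_inv f" m] fps_inv[OF f0 f1] by (simp add: A_def)
  moreover obtain G where "fps_deriv (A oo f)
      = (\<Sum>k<Suc n. fps_const (of_nat k * A $ k) * (f ^ (k - 1) * fps_deriv f)) + f ^ n * G"
    using fps_deriv_compose_eq_cutoff_sum[OF f0] by blast
  ultimately have expansion: "of_nat m * fps_X ^ (m - 1)
      = (\<Sum>k<Suc n. fps_const (of_nat k * A $ k) * (f ^ (k - 1) * fps_deriv f)) + f ^ n * G"
    by (simp add: fps_deriv_power')
  have res_add: "res (g + h) = res g + res h" for g h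
    by (simp add: res_def distrib_right)
  have res_sum: "res (\<Sum>k\<in>I. g k) = (\<Sum>k\<in>I. res (g k))" for g and I :: "nat set"
    by (simp add: res_def fps_to_fls_sum sum_distrib_right fls_nth_sum)
  have res_const: "res (fps_const c * g) = c * res g" for c g
    by (simp add: res_def fls_times_fps_to_fls mult.assoc)
  have "of_nat m * res (fps_X ^ (m - 1)) = res (of_nat m * fps_X ^ (m - 1))"
    using res_const[of "of_nat m"] by (simp add: fps_of_nat)
  also have "\<dots> = (\<Sum>k<Suc n. of_nat k * A $ k * res (f ^ (k - 1) * fps_deriv f)) + res (f ^ n * G)"
    by (simp only: expansion res_add res_sum res_const)
  also have "res (f ^ n * G) = 0"
    unfolding res_def using f1 by (intro fls_residue_fps_power_times_div_power) auto
  also have "(\<Sum>k<Suc n. of_nat k * A $ k * res (f ^ (k - 1) * fps_deriv f)) = of_nat n * A $ n"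
  proof -
    have "of_nat k * A $ k * res (f ^ (k - 1) * fps_deriv f) = (if k = n then of_nat n * A $ n else 0)"
      if "k < Suc n" for k
      using fls_residue_power_times_deriv_div_power[OF \<open>subdegree f = 1\<close>, of k n] that
      by (cases "k = 0") (auto simp: res_def simp del: fls_residue_def)
    then show ?thesis by simp
  qed
  finally show ?thesis
    using fls_residue_X_power_times_inverse_power[OF K0 m]
    by (simp add: res_def A_def f_def del: fls_residue_def)
qed

lemma fps_deriv_exp_minus_one_power:
  fixes c :: "'a::field_char_0"
  defines "E \<equiv> fps_exp c - 1"
  shows "fps_deriv (E ^ Suc n) = fps_const (of_nat (Suc n) * c) * (E ^ Suc n + E ^ n)"
proof -
  have "fps_deriv E = fps_const c * (E + 1)"
    by (simp add: E_def)
  then have "fps_deriv (E ^ Suc n) = fps_const (of_nat (Suc n)) * (fps_const c * (E + 1)) * E ^ n"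
    by (simp only: fps_deriv_power diff_Suc_1)
  also have "\<dots> = fps_const (of_nat (Suc n) * c) * (E ^ Suc n + E ^ n)"
    by (simp add: algebra_simps flip: fps_const_mult del: of_nat_Suc)
  finally show ?thesis .
qed

text \<open>Comparing coefficients in the derivative identity above gives exactly the recurrence
  \<open>S(k+1, n+1) = (n+1) S(k, n+1) + S(k, n)\<close> of the Stirling numbers.\<close>

lemma fps_exp_minus_one_power_nth:
  fixes c :: "'a::field_char_0"
  shows "((fps_exp c - 1) ^ n) $ k = fact n * c ^ k * of_nat (Stirling k n) / fact k"
proof -
  define E where "E = fps_exp c - 1"
  have "fact k * (E ^ n) $ k = fact n * c ^ k * of_nat (Stirling k n)" for k
  proof (induction n arbitrary: k)
    case 0
    then show ?case by (cases k) (auto simp: E_def)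
  next
    case (Suc n)
    note lower_power_nth = Suc.IH
    show ?case
    proof (induction k)
      case 0
      then show ?case by (simp add: E_def)
    next
      case (Suc k)
      have "fact (Suc k) * (E ^ Suc n) $ Suc k = fact k * (of_nat (Suc k) * (E ^ Suc n) $ Suc k)"
        by (simp only: fact_Suc mult_ac)
      also have "\<dots> = fact k * fps_deriv (E ^ Suc n) $ k"
        by (simp only: fps_deriv_nth Suc_eq_plus1)
      also have "\<dots> = of_nat (Suc n) * c * (fact k * (E ^ Suc n) $ k + fact k * (E ^ n) $ k)"
        unfolding E_def fps_deriv_exp_minus_one_power fps_mult_left_const_nth fps_add_nth
        by (simp add: algebra_simps)
      also have "\<dots> = fact (Suc n) * c ^ Suc k * of_nat (Stirling (Suc k) (Suc n))"
        unfolding Suc.IH lower_power_nth by (simp add: algebra_simps)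
      finally show ?case .
    qed
  qed
  then show ?thesis
    by (simp add: E_def field_simps)
qed

lemma fps_log1_nth_0: "fps_log1 h $ 0 = 0"
  by (simp add: fps_log1_def fps_ln_nth)

lemma fps_deriv_fps_log1:
  assumes "h $ 0 = 1"
  shows "fps_deriv (fps_log1 h) = inverse h * fps_deriv h"
proof -
  have h1: "(h - 1) $ 0 = 0" using assms by simp
  have "(1 + fps_X) oo (h - 1) = h"
    by (simp add: fps_compose_add_distrib fps_X_fps_compose_startby0[OF h1])
  moreover have "fps_deriv (fps_log1 h) = (fps_deriv (fps_ln 1) oo (h - 1)) * fps_deriv (h - 1)"
    unfolding fps_log1_def by (rule fps_compose_deriv[OF h1])
  ultimately show ?thesis
    by (simp add: fps_ln_deriv fps_inverse_compose[OF h1])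
qed

lemma fps_deriv_fps_exp_compose:
  fixes u :: "'a::field_char_0 fps"
  assumes "u $ 0 = 0"
  shows "fps_deriv (fps_exp 1 oo u) = (fps_exp 1 oo u) * fps_deriv u"
  using fps_compose_deriv[OF assms, of "fps_exp 1"] by simp

lemma fps_cpow_nth_0: "fps_cpow h a $ 0 = 1"
  by (simp add: fps_cpow_def fps_compose_nth)

lemma fps_cpow_inverse:
  assumes "h $ 0 = 1"
  shows "fps_cpow (inverse h) a = inverse (fps_cpow h a)"
proof -
  define u where "u = fps_const a * fps_log1 h"
  define v where "v = fps_const a * fps_log1 (inverse h)"
  define Z where "Z = (fps_exp 1 oo v) * (fps_exp 1 oo u)"
  have u0: "u $ 0 = 0" and v0: "v $ 0 = 0" by (simp_all add: u_def v_def fps_log1_nth_0)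
  have "inverse (inverse h) * fps_deriv (inverse h) = - (inverse h * fps_deriv h) * (h * inverse h)"
    using assms by (simp add: fps_inverse_deriv power2_eq_square algebra_simps)
  then have "fps_deriv u + fps_deriv v = 0"
    using assms by (simp add: u_def v_def fps_deriv_fps_log1 inverse_mult_eq_1' algebra_simps)
  moreover have "fps_deriv Z = Z * (fps_deriv u + fps_deriv v)"
    by (simp add: Z_def fps_deriv_fps_exp_compose[OF u0] fps_deriv_fps_exp_compose[OF v0] algebra_simps)
  ultimately have "fps_deriv Z = 0"
    by simp
  then have "Z = fps_const (Z $ 0)" by simp
  also have "Z $ 0 = 1" by (simp add: Z_def)
  finally have "fps_cpow h a * fps_cpow (inverse h) a = 1"
    by (simp add: Z_def fps_cpow_def u_def v_def mult.commute)
  then have "inverse (fps_cpow h a) = fps_cpow (inverse h) a"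
    by (rule fps_inverse_unique)
  then show ?thesis ..
qed

lemma fps_divide_subdegree_1:
  fixes f g :: "'a::field fps"
  assumes "subdegree g = 1"
  shows "f / g = fps_shift 1 (f * inverse (fps_shift 1 g))"
  using assms by (simp add: fps_divide_def)

lemma subdegree_fps_exp_minus_one:
  fixes c :: "'a::field_char_0"
  assumes "c \<noteq> 0"
  shows "subdegree (fps_exp c - 1) = 1"
  using assms by (intro subdegreeI) auto

lemma fps_X_divide_exp_minus_one:
  "fps_X / (fps_exp 1 - 1) = inverse (fps_shift 1 (fps_exp (1::'a::field_char_0) - 1))"
proof -
  have "fps_X / (fps_exp 1 - 1)
      = fps_shift 1 (fps_X * inverse (fps_shift 1 (fps_exp (1::'a) - 1)))"
    by (rule fps_divide_subdegree_1[OF subdegree_fps_exp_minus_one]) simp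
  then show ?thesis
    by (simp only: mult.commute[of fps_X] fps_shift_times_fps_X')
qed

lemma fps_exp_minus_one_divide_X:
  "(fps_exp 1 - 1) / fps_X = fps_shift 1 (fps_exp (1::'a::field_char_0) - 1)"
  by (simp add: fps_divide_def fps_X_unit_factor)

lemma fps_X_power_times_exp_divide_exp_minus_one:
  fixes b c :: "'a::field_char_0"
  assumes "c \<noteq> 0"
  shows "fps_X ^ 2 * fps_exp b / (fps_exp c - 1)
    = fps_X * (fps_exp b * inverse (fps_shift 1 (fps_exp c - 1)))"
proof -
  have "fps_X ^ 2 * fps_exp b * inverse (fps_shift 1 (fps_exp c - 1))
      = fps_X * (fps_exp b * inverse (fps_shift 1 (fps_exp c - 1))) * fps_X"
    by (simp add: power2_eq_square mult_ac)
  then show ?thesis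
    by (simp only: fps_divide_subdegree_1[OF subdegree_fps_exp_minus_one[OF assms]]
        fps_shift_times_fps_X')
qed

lemma fps_shift_exp_minus_one_power_nth:
  fixes c :: "'a::field_char_0"
  shows "(fps_shift 1 (fps_exp c - 1) ^ n) $ l
    = fact n * c ^ (l + n) * of_nat (Stirling (l + n) n) / fact (l + n)"
proof -
  define C where "C = fps_shift 1 (fps_exp c - 1)"
  have "fps_exp c - 1 = C * fps_X"
    by (rule fps_ext) (auto simp: C_def)
  then have "C ^ n * fps_X ^ n = (fps_exp c - 1) ^ n"
    by (simp add: power_mult_distrib)
  moreover have "(C ^ n) $ l = (C ^ n * fps_X ^ n) $ (l + n)"
    by (simp add: fps_X_power_mult_right_nth)
  ultimately show ?thesis
    by (simp add: C_def fps_exp_minus_one_power_nth)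
qed

lemma inverse_exp_divide_power_nth:
  fixes b c :: "'a::field_char_0"
  assumes "c \<noteq> 0"
  shows "(inverse (fps_exp b * inverse (fps_shift 1 (fps_exp c - 1))) ^ n) $ r
    = (\<Sum>l = 0..r. (fact n * c ^ (l + n) * of_nat (Stirling (l + n) n) / fact (l + n))
        * ((- (of_nat n * b)) ^ (r - l) / fact (r - l)))"
proof -
  define C where "C = fps_shift 1 (fps_exp c - 1)"
  have "C $ 0 \<noteq> 0" using assms by (simp add: C_def)
  then have "inverse (fps_exp b * inverse C) = C * fps_exp (- b)"
    by (simp add: fps_inverse_mult fps_exp_neg mult.commute)
  then have "inverse (fps_exp b * inverse C) ^ n = C ^ n * fps_exp (- (of_nat n * b))"
    by (simp add: power_mult_distrib fps_exp_power_mult)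
  then show ?thesis
    unfolding C_def[symmetric]
    by (simp add: fps_mult_nth fps_shift_exp_minus_one_power_nth[of c n, folded C_def])
qed

lemma sheffer_poly_eq_compose_nth:
  assumes "sheffer g f S" "g $ 0 \<noteq> 0"
  shows "poly (S n) y = fact n * ((inverse g * fps_exp y) oo fps_inv f) $ n"
proof -
  have w0: "fps_inv f $ 0 = 0" by (simp add: fps_inv_def)
  have "Abs_fps (\<lambda>k. poly (S k) y / fact k) = inverse (g oo fps_inv f) * (fps_exp y oo fps_inv f)"
    using assms(1) by (simp only: sheffer_def)
  also have "\<dots> = (inverse g * fps_exp y) oo fps_inv f"
    by (simp only: fps_inverse_compose[OF w0 assms(2)] fps_compose_mult_distrib[OF w0])
  finally have "poly (S n) y / fact n = ((inverse g * fps_exp y) oo fps_inv f) $ n"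
    by (simp only: fps_eq_iff fps_nth_Abs_fps)
  then show ?thesis
    by (simp only: divide_eq_eq fact_nonzero mult.commute simp_thms)
qed

lemma sheffer_poly_lagrange:
  assumes "sheffer g (fps_X * K) S" "g $ 0 \<noteq> 0" "K $ 0 \<noteq> 0" "1 \<le> n"
  shows "poly (S n) y = fact (n - 1)
    * (\<Sum>i = 1..n. of_nat i * (inverse g * fps_exp y) $ i * (inverse K ^ n) $ (n - i))"
proof -
  define H where "H = inverse g * fps_exp y"
  define w where "w = fps_inv (fps_X * K)"
  have "poly (S n) y = fact n * (\<Sum>i = 0..n. H $ i * (w ^ i) $ n)"
    unfolding sheffer_poly_eq_compose_nth[OF assms(1,2)] fps_compose_nth H_def w_def ..
  also have "\<dots> = fact n * (\<Sum>i = 1..n. H $ i * (w ^ i) $ n)"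
    using assms(4) by (simp add: sum.atLeast_Suc_atMost)
  also have "\<dots> = fact (n - 1) * (\<Sum>i = 1..n. of_nat i * H $ i * (inverse K ^ n) $ (n - i))"
    unfolding sum_distrib_left
  proof (rule sum.cong)
    fix i assume "i \<in> {1..n}"
    then have "of_nat n * (w ^ i) $ n = of_nat i * (inverse K ^ n) $ (n - i)"
      unfolding w_def by (intro fps_inv_power_nth[OF assms(3)]) auto
    then show "fact n * (H $ i * (w ^ i) $ n)
        = fact (n - 1) * (of_nat i * H $ i * (inverse K ^ n) $ (n - i))"
      using assms(4) by (simp add: fact_reduce[of n] mult_ac)
  qed simp
  finally show ?thesis by (simp only: H_def)
qed

lemma inverse_fps_cpow_times_exp_nth:
  "(inverse (fps_cpow ((fps_exp 1 - 1) / fps_X) a) * fps_exp x) $ i = bernoulli_ord a i x / fact i"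
  using fps_cpow_inverse[of "fps_shift 1 (fps_exp 1 - 1)" a]
  by (simp add: bernoulli_ord_def fps_X_divide_exp_minus_one fps_exp_minus_one_divide_X)

lemma choose_ratio_eq_fact:
  assumes "1 \<le> i" "l + i \<le> n"
  shows "of_nat ((n - 1) choose l) / of_nat ((l + n) choose l) * of_nat ((n - 1 - l) choose (n - i - l))
    = (fact (n - 1) * fact n * of_nat i / (fact i * fact (l + n) * fact (n - i - l)) :: 'a::field_char_0)"
proof -
  obtain i' where i: "i = Suc i'" using assms(1) by (cases i) auto
  define j where "j = n - i - l"
  have diff: "n - 1 - l = i' + j" using assms by (simp add: i j_def)
  have "l \<le> n - 1" using assms by simp
  from binomial_fact[OF this]
  have e1: "of_nat ((n - 1) choose l) = (fact (n - 1) / (fact l * fact (i' + j)) :: 'a)"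
    unfolding diff .
  have e2: "of_nat ((n - 1 - l) choose j) = (fact (i' + j) / (fact j * fact i') :: 'a)"
    unfolding diff using binomial_fact[of j "i' + j"] by simp
  have e3: "of_nat ((l + n) choose l) = (fact (l + n) / (fact l * fact n) :: 'a)"
    by (simp add: binomial_fact)
  have "fact i = of_nat i * (fact i' :: 'a)"
    by (simp add: i)
  moreover have "(of_nat i :: 'a) \<noteq> 0"
    using assms(1) by simp
  ultimately show ?thesis
    unfolding j_def[symmetric] e1 e2 e3 by (simp add: field_simps)
qed

lemma sum_triangle_reindex_diff:
  fixes g :: "nat \<Rightarrow> nat \<Rightarrow> 'a::comm_monoid_add"
  assumes "1 \<le> n"
  shows "(\<Sum>l = 0..n - 1. \<Sum>j = 0..n - 1 - l. g l j)
    = (\<Sum>i = 1..n. \<Sum>l = 0..n - i. g l (n - i - l))"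
proof -
  have "(\<Sum>j = 0..n - 1 - l. g l j) = (\<Sum>i = 1..n - l. g l (n - i - l))" if "l \<in> {0..n - 1}" for l
    by (rule sum.reindex_bij_witness[where i="\<lambda>j. n - l - j" and j="\<lambda>i. n - i - l"])
      (use that assms in auto)
  then have "(\<Sum>l = 0..n - 1. \<Sum>j = 0..n - 1 - l. g l j)
      = (\<Sum>l = 0..n - 1. \<Sum>i = 1..n - l. g l (n - i - l))"
    by (rule sum.cong[OF refl])
  also have "\<dots> = (\<Sum>l = 0..n - 1. \<Sum>i = 1..n. if l + i \<le> n then g l (n - i - l) else 0)"
    by (rule sum.cong[OF refl], subst sum.inter_filter[symmetric]) (auto intro!: sum.cong)
  also have "\<dots> = (\<Sum>i = 1..n. \<Sum>l = 0..n - 1. if l + i \<le> n then g l (n - i - l) else 0)"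
    by (rule sum.swap)
  also have "\<dots> = (\<Sum>i = 1..n. \<Sum>l = 0..n - i. g l (n - i - l))"
    by (rule sum.cong[OF refl], subst sum.inter_filter[symmetric]) (auto intro!: sum.cong)
  finally show ?thesis .
qed

text \<open>The argument of \<open>B\<close> is written as it arises from \<open>sum_triangle_reindex_diff\<close>;
  it equals \<open>i\<close>.\<close>

lemma lagrange_coefficient_eq_choose_ratio:
  fixes B :: "nat \<Rightarrow> 'a::field_char_0" and c y :: 'a
  assumes "1 \<le> i" "l + i \<le> n"
  shows "fact (n - 1) * (of_nat i * (B i / fact i)
      * (fact n * c ^ (l + n) * of_nat s / fact (l + n) * (y ^ (n - i - l) / fact (n - i - l))))
    = of_nat ((n - 1) choose l) / of_nat ((l + n) choose l) * of_nat ((n - 1 - l) choose (n - i - l))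
      * of_nat s * c ^ (n + l) * y ^ (n - i - l) * B (n - l - (n - i - l))"
proof -
  have "n - l - (n - i - l) = i" using assms by simp
  then show ?thesis
    unfolding choose_ratio_eq_fact[OF assms] by (simp add: field_simps)
qed

theorem theorem3:
  fixes a b c :: complex and S :: "nat \<Rightarrow> complex poly" and n :: nat and x :: complex
  assumes "c \<noteq> 0"
    and "sheffer (fps_cpow ((fps_exp 1 - 1) / fps_X) a)
                 (fps_X ^ 2 * fps_exp b / (fps_exp c - 1)) S"
    and "n \<ge> 1"
  shows "poly (S n) x =
    (\<Sum>l = 0..n - 1. \<Sum>j = 0..n - 1 - l.
       (of_nat ((n - 1) choose l) / of_nat ((l + n) choose l))
       * of_nat ((n - 1 - l) choose j) * of_nat (Stirling (l + n) n)
       * c ^ (n + l) * (- (of_nat n * b)) ^ j * bernoulli_ord a (n - l - j) x)"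
proof -
  define g where "g = fps_cpow ((fps_exp 1 - 1) / fps_X) a"
  define K where "K = fps_exp b * inverse (fps_shift 1 (fps_exp c - 1))"
  have "sheffer g (fps_X * K) S"
    using assms(2) unfolding g_def K_def fps_X_power_times_exp_divide_exp_minus_one[OF assms(1)] .
  moreover have "g $ 0 \<noteq> 0" by (simp add: g_def fps_cpow_nth_0)
  moreover have "K $ 0 \<noteq> 0" using assms(1) by (simp add: K_def)
  ultimately have "poly (S n) x = fact (n - 1)
      * (\<Sum>i = 1..n. of_nat i * (inverse g * fps_exp x) $ i * (inverse K ^ n) $ (n - i))"
    by (rule sheffer_poly_lagrange[OF _ _ _ assms(3)])
  also have "\<dots> = (\<Sum>i = 1..n. \<Sum>l = 0..n - i.
      fact (n - 1) * (of_nat i * (bernoulli_ord a i x / fact i)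
      * (fact n * c ^ (l + n) * of_nat (Stirling (l + n) n) / fact (l + n)
         * ((- (of_nat n * b)) ^ (n - i - l) / fact (n - i - l)))))"
    by (simp only: g_def K_def inverse_fps_cpow_times_exp_nth inverse_exp_divide_power_nth[OF assms(1)]
        sum_distrib_left)
  finally have lagrange: "poly (S n) x = \<dots>" .
  show ?thesis
    unfolding lagrange sum_triangle_reindex_diff[OF assms(3)]
    by (intro sum.cong refl lagrange_coefficient_eq_choose_ratio[where B = "\<lambda>k. bernoulli_ord a k x"])
      auto
qed

end
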